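(* Let $|\psi\rangle$ be a pure state of a multi-qudit system and $|c_\psi|=\max_{|\phi\rangle}|\langle\psi|\phi\rangle|$, the maximum over pure stabilizer states $|\phi\rangle$ of the same system. For all $\alpha\in(0,1)\cup(1,\infty)$ and $\beta\in(-\infty,0)\cup(0,\infty)$, $$M_{\alpha,\beta}(|\psi\rangle\langle\psi|)=\frac{1}{(1-\alpha)\beta}\left\{\left[\Big(\frac{1+|c_\psi|}{2}\Big)^{\alpha}+\Big(\frac{1-|c_\psi|}{2}\Big)^{\alpha}\right]^{\beta}-1\right\}.$$
   Context: Stabilizer formalism: for a qudit $\mathbb C^d$ with basis $\{|j\rangle\}_{j\in\mathbb Z_d}$, let $X|j\rangle=|j+1\bmod d\rangle$, $Z|j\rangle=\omega^j|j\rangle$, $\omega=e^{2\pi i/d}$, $T_u=\tau^{-u_1u_2}Z^{u_1}X^{u_2}$, $\tau=e^{(d+1)\pi i/d}$; on $n$ qudits Heisenberg–Weyl operators are tensor products of these. Clifford unitaries $V$ satisfy: for every $T_u$ there are $u',\theta$ with $VT_uV^\dagger=e^{i\theta}T_{u'}$. Pure stabilizer states are $V|0\cdots0\rangle$, $V$ Clifford. For $\alpha\in(0,1)\cup(1,\infty)$, $\beta\in(-\infty,0)\cup(0,\infty)$: $S_{\alpha,\beta}(\rho)=\frac{1}{(1-\alpha)\beta}[(\mathrm{Tr}\rho^\alpha)^\beta-1]$, $J_{\alpha,\beta}(\rho,\sigma)=S_{\alpha,\beta}(\tfrac{\rho+\sigma}{2})-\tfrac12S_{\alpha,\beta}(\rho)-\tfrac12S_{\alpha,\beta}(\sigma)$,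 and for a pure state $M_{\alpha,\beta}(|\psi\rangle\langle\psi|)=\min_{|\phi\rangle}J_{\alpha,\beta}(|\psi\rangle\langle\psi|,|\phi\rangle\langle\phi|)$, minimum over pure stabilizer states $|\phi\rangle$ of the same system. *)

theory Defs
  imports "HOL-Analysis.Analysis"
begin

text \<open>Vectors are functions nat list => complex (only values on the basis matter);
  operators are matrices nat list => nat list => complex, entry (j,k) = <j|A|k>.\<close>

definition qbasis :: "nat \<Rightarrow> nat \<Rightarrow> nat list set" where
  "qbasis n d = {j. length j = n \<and> (\<forall>x\<in>set j. x < d)}"

definition omega :: "nat \<Rightarrow> complex" where
  "omega d = cis (2 * pi / real d)"

definition tau :: "nat \<Rightarrow> complex" where
  "tau d = cis ((real d + 1) * pi / real d)"

text \<open>Single-qudit Heisenberg-Weyl operator T_u = tau^(-u1 u2) Z^u1 X^u2, u = (u1,u2) in Z_d^2.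
  Since Z^u1 X^u2 |k> = omega^(u1 (k+u2)) |k+u2 mod d>, its (j,k) entry is as below.\<close>

definition hw1 :: "nat \<Rightarrow> nat \<times> nat \<Rightarrow> nat \<Rightarrow> nat \<Rightarrow> complex" where
  "hw1 d u j k = (if j = (k + snd u) mod d
                  then inverse (tau d ^ (fst u * snd u)) * omega d ^ (fst u * j) else 0)"

definition hw_index :: "nat \<Rightarrow> nat \<Rightarrow> (nat \<times> nat) list set" where
  "hw_index n d = {u. length u = n \<and> (\<forall>p\<in>set u. fst p < d \<and> snd p < d)}"

definition hw :: "nat \<Rightarrow> (nat \<times> nat) list \<Rightarrow> nat list \<Rightarrow> nat list \<Rightarrow> complex" where
  "hw d u j k = (\<Prod>i<length u. hw1 d (u ! i) (j ! i) (k ! i))"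

definition mmul :: "nat \<Rightarrow> nat \<Rightarrow> (nat list \<Rightarrow> nat list \<Rightarrow> complex) \<Rightarrow>
    (nat list \<Rightarrow> nat list \<Rightarrow> complex) \<Rightarrow> nat list \<Rightarrow> nat list \<Rightarrow> complex" where
  "mmul n d A B j k = (\<Sum>l\<in>qbasis n d. A j l * B l k)"

definition adj :: "(nat list \<Rightarrow> nat list \<Rightarrow> complex) \<Rightarrow> nat list \<Rightarrow> nat list \<Rightarrow> complex" where
  "adj A j k = cnj (A k j)"

definition idop :: "nat list \<Rightarrow> nat list \<Rightarrow> complex" where
  "idop j k = (if j = k then 1 else 0)"

definition unitary_op :: "nat \<Rightarrow> nat \<Rightarrow> (nat list \<Rightarrow> nat list \<Rightarrow> complex) \<Rightarrow> bool" where
  "unitary_op n d V \<longleftrightarrow>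
     (\<forall>j\<in>qbasis n d. \<forall>k\<in>qbasis n d.
        mmul n d V (adj V) j k = idop j k \<and> mmul n d (adj V) V j k = idop j k)"

definition clifford :: "nat \<Rightarrow> nat \<Rightarrow> (nat list \<Rightarrow> nat list \<Rightarrow> complex) \<Rightarrow> bool" where
  "clifford n d V \<longleftrightarrow> unitary_op n d V \<and>
     (\<forall>u\<in>hw_index n d. \<exists>u'\<in>hw_index n d. \<exists>\<theta>::real.
        \<forall>j\<in>qbasis n d. \<forall>k\<in>qbasis n d.
          mmul n d (mmul n d V (hw d u)) (adj V) j k = cis \<theta> * hw d u' j k)"

definition stab_states :: "nat \<Rightarrow> nat \<Rightarrow> (nat list \<Rightarrow> complex) set" where
  "stab_states n d = {(\<lambda>j. V j (replicate n 0)) | V. clifford n d V}"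

definition inner :: "nat \<Rightarrow> nat \<Rightarrow> (nat list \<Rightarrow> complex) \<Rightarrow> (nat list \<Rightarrow> complex) \<Rightarrow> complex" where
  "inner n d \<psi> \<phi> = (\<Sum>j\<in>qbasis n d. cnj (\<psi> j) * \<phi> j)"

definition proj :: "(nat list \<Rightarrow> complex) \<Rightarrow> nat list \<Rightarrow> nat list \<Rightarrow> complex" where
  "proj \<psi> j k = \<psi> j * cnj (\<psi> k)"

definition spectral_decomp :: "nat \<Rightarrow> nat \<Rightarrow> (nat list \<Rightarrow> nat list \<Rightarrow> complex) \<Rightarrow>
    (nat list \<Rightarrow> nat list \<Rightarrow> complex) \<Rightarrow> (nat list \<Rightarrow> real) \<Rightarrow> bool" where
  "spectral_decomp n d \<rho> e lam \<longleftrightarrow>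
     (\<forall>i\<in>qbasis n d. \<forall>i'\<in>qbasis n d. inner n d (e i) (e i') = (if i = i' then 1 else 0)) \<and>
     (\<forall>j\<in>qbasis n d. \<forall>k\<in>qbasis n d.
        \<rho> j k = (\<Sum>i\<in>qbasis n d. complex_of_real (lam i) * e i j * cnj (e i k)))"

text \<open>Tr rho^alpha for a positive semidefinite rho: sum of lambda_i^alpha over its eigenvalues
  (with multiplicity); independent of the chosen spectral decomposition.\<close>

definition tr_pow :: "nat \<Rightarrow> nat \<Rightarrow> real \<Rightarrow> (nat list \<Rightarrow> nat list \<Rightarrow> complex) \<Rightarrow> real" where
  "tr_pow n d \<alpha> \<rho> =
     (SOME s. \<exists>e lam. spectral_decomp n d \<rho> e lam \<and> s = (\<Sum>i\<in>qbasis n d. lam i powr \<alpha>))"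

definition S_ab :: "nat \<Rightarrow> nat \<Rightarrow> real \<Rightarrow> real \<Rightarrow> (nat list \<Rightarrow> nat list \<Rightarrow> complex) \<Rightarrow> real" where
  "S_ab n d \<alpha> \<beta> \<rho> = (1 / ((1 - \<alpha>) * \<beta>)) * ((tr_pow n d \<alpha> \<rho>) powr \<beta> - 1)"

definition J_ab :: "nat \<Rightarrow> nat \<Rightarrow> real \<Rightarrow> real \<Rightarrow> (nat list \<Rightarrow> nat list \<Rightarrow> complex) \<Rightarrow>
    (nat list \<Rightarrow> nat list \<Rightarrow> complex) \<Rightarrow> real" where
  "J_ab n d \<alpha> \<beta> \<rho> \<sigma> = S_ab n d \<alpha> \<beta> (\<lambda>j k. (\<rho> j k + \<sigma> j k) / 2)
      - S_ab n d \<alpha> \<beta> \<rho> / 2 - S_ab n d \<alpha> \<beta> \<sigma> / 2"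

text \<open>M_{alpha,beta}(|psi><psi|) = min over pure stabilizer states (written as Inf; the
  minimum is attained).\<close>

definition M_ab :: "nat \<Rightarrow> nat \<Rightarrow> real \<Rightarrow> real \<Rightarrow> (nat list \<Rightarrow> complex) \<Rightarrow> real" where
  "M_ab n d \<alpha> \<beta> \<psi> = (INF \<phi>\<in>stab_states n d. J_ab n d \<alpha> \<beta> (proj \<psi>) (proj \<phi>))"

definition c_abs :: "nat \<Rightarrow> nat \<Rightarrow> (nat list \<Rightarrow> complex) \<Rightarrow> real" where
  "c_abs n d \<psi> = (SUP \<phi>\<in>stab_states n d. cmod (inner n d \<psi> \<phi>))"

end

theory Submission
  imports Defs
begin

text \<open>For unit vectors \<open>\<psi>, \<phi>\<close> with \<open>c = |\<langle>\<psi>|\<phi>\<rangle>|\<close>, the mixture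
  \<open>(|\<psi>\<rangle>\<langle>\<psi>| + |\<phi>\<rangle>\<langle>\<phi>|) / 2\<close> equals \<open>|p\<rangle>\<langle>p| + |m\<rangle>\<langle>m|\<close> for orthogonal vectors
  \<open>p, m\<close> of squared norms \<open>(1 \<plusminus> c) / 2\<close>. Its spectrum is therefore \<open>(1 + c) / 2\<close>,
  \<open>(1 - c) / 2\<close> and zeros, and since pure states have zero entropy,
  \<open>J(|\<psi>\<rangle>\<langle>\<psi>|, |\<phi>\<rangle>\<langle>\<phi>|) = F(c)\<close> for an explicit \<open>F\<close> that is continuous and
  non-increasing on \<open>[0, 1]\<close>. Hence the infimum of \<open>F(c)\<close> over stabilizer states is
  \<open>F\<close> at the supremum of \<open>c\<close>.\<close>

lemma finite_qbasis: "finite (qbasis n d)"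
proof (rule finite_subset)
  show "qbasis n d \<subseteq> {xs. set xs \<subseteq> {0..<d} \<and> length xs = n}"
    unfolding qbasis_def by auto
qed (rule finite_lists_length_eq, simp)

lemma qbasis_two_elements:
  assumes "d \<ge> 2" and "n \<ge> 1"
  obtains a b where "a \<in> qbasis n d" "b \<in> qbasis n d" "a \<noteq> b"
proof
  show "replicate n 0 \<in> qbasis n d" "1 # replicate (n - 1) 0 \<in> qbasis n d"
    using assms unfolding qbasis_def by auto
  show "replicate n 0 \<noteq> 1 # replicate (n - 1) (0::nat)"
    using assms by (cases n) auto
qed

lemma sum_idop_left: "j \<in> qbasis n d \<Longrightarrow> (\<Sum>l\<in>qbasis n d. idop j l * f l) = f j"
  using finite_qbasis by (simp add: idop_def if_distrib[of "\<lambda>c. c * _"] cong: if_cong)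

lemma sum_idop_right: "j \<in> qbasis n d \<Longrightarrow> (\<Sum>l\<in>qbasis n d. f l * idop l j) = f j"
  using finite_qbasis by (simp add: idop_def if_distrib[of "\<lambda>c. _ * c"] cong: if_cong)

definition sqnorm :: "nat \<Rightarrow> nat \<Rightarrow> (nat list \<Rightarrow> complex) \<Rightarrow> real" where
  "sqnorm n d x = (\<Sum>j\<in>qbasis n d. (cmod (x j))\<^sup>2)"

lemma inner_self_eq_sqnorm: "inner n d x x = of_real (sqnorm n d x)"
  unfolding inner_def sqnorm_def of_real_sum
  by (intro sum.cong refl) (metis complex_norm_square mult.commute)

lemma sqnorm_nonneg: "0 \<le> sqnorm n d x"
  unfolding sqnorm_def by (intro sum_nonneg) simp

lemma sqnorm_eq_0_imp_zero: "sqnorm n d x = 0 \<Longrightarrow> j \<in> qbasis n d \<Longrightarrow> x j = 0"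
  unfolding sqnorm_def using finite_qbasis by (simp add: sum_nonneg_eq_0_iff)

lemma inner_sesquilinear:
  "inner n d (\<lambda>j. x j + y j) z = inner n d x z + inner n d y z"
  "inner n d z (\<lambda>j. x j + y j) = inner n d z x + inner n d z y"
  "inner n d (\<lambda>j. x j - y j) z = inner n d x z - inner n d y z"
  "inner n d z (\<lambda>j. x j - y j) = inner n d z x - inner n d z y"
  "inner n d (\<lambda>j. t * x j) z = cnj t * inner n d x z"
  "inner n d z (\<lambda>j. t * x j) = t * inner n d z x"
  unfolding inner_def
  by (simp_all add: algebra_simps sum.distrib sum_subtractf sum_distrib_left)

lemma inner_swap: "inner n d y x = cnj (inner n d x y)"
  unfolding inner_def by (simp add: mult.commute)

lemma inner_cong:
  "(\<And>j. j \<in> qbasis n d \<Longrightarrow> x j = x' j) \<Longrightarrow> (\<And>j. j \<in> qbasis n d \<Longrightarrow> y j = y' j)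
   \<Longrightarrow> inner n d x y = inner n d x' y'"
  unfolding inner_def by (rule sum.cong) auto

lemma inner_idop_left:
  assumes "a \<in> qbasis n d"
  shows "inner n d (\<lambda>j. idop j a) x = x a"
proof -
  have "inner n d (\<lambda>j. idop j a) x = (\<Sum>j\<in>qbasis n d. x j * idop j a)"
    unfolding inner_def by (intro sum.cong) (auto simp: idop_def)
  then show ?thesis using sum_idop_right[OF assms] by simp
qed

lemma inner_idop_right: "a \<in> qbasis n d \<Longrightarrow> inner n d x (\<lambda>j. idop j a) = cnj (x a)"
  by (subst inner_swap) (simp add: inner_idop_left)

lemma unit_mult_cnj: "cmod \<zeta> = 1 \<Longrightarrow> \<zeta> * x * cnj (\<zeta> * y) = x * cnj y"
  using complex_norm_square[of \<zeta>] by (simp add: algebra_simps)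

definition mvmul :: "nat \<Rightarrow> nat \<Rightarrow> (nat list \<Rightarrow> nat list \<Rightarrow> complex) \<Rightarrow> (nat list \<Rightarrow> complex)
    \<Rightarrow> nat list \<Rightarrow> complex" where
  "mvmul n d A x j = (\<Sum>l\<in>qbasis n d. A j l * x l)"

definition hermitian :: "nat \<Rightarrow> nat \<Rightarrow> (nat list \<Rightarrow> nat list \<Rightarrow> complex) \<Rightarrow> bool" where
  "hermitian n d H \<longleftrightarrow> (\<forall>j\<in>qbasis n d. \<forall>k\<in>qbasis n d. H j k = cnj (H k j))"

definition involution :: "nat \<Rightarrow> nat \<Rightarrow> (nat list \<Rightarrow> nat list \<Rightarrow> complex) \<Rightarrow> bool" where
  "involution n d H \<longleftrightarrow> (\<forall>j\<in>qbasis n d. \<forall>k\<in>qbasis n d. mmul n d H H j k = idop j k)"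

definition orthonormal :: "nat \<Rightarrow> nat \<Rightarrow> (nat list \<Rightarrow> nat list \<Rightarrow> complex) \<Rightarrow> bool" where
  "orthonormal n d e \<longleftrightarrow>
     (\<forall>i\<in>qbasis n d. \<forall>i'\<in>qbasis n d. inner n d (e i) (e i') = (if i = i' then 1 else 0))"

lemma mvmul_mvmul_involution:
  assumes "involution n d H" and j: "j \<in> qbasis n d"
  shows "mvmul n d H (mvmul n d H x) j = x j"
proof -
  have "mvmul n d H (mvmul n d H x) j
      = (\<Sum>l\<in>qbasis n d. \<Sum>m\<in>qbasis n d. H j l * H l m * x m)"
    unfolding mvmul_def by (simp add: sum_distrib_left mult.assoc)
  also have "\<dots> = (\<Sum>m\<in>qbasis n d. mmul n d H H j m * x m)"
    unfolding mmul_def by (subst sum.swap) (simp add: sum_distrib_right)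
  also have "\<dots> = (\<Sum>m\<in>qbasis n d. idop j m * x m)"
    using assms unfolding involution_def by (intro sum.cong) auto
  finally show ?thesis using sum_idop_left[OF j] by simp
qed

lemma inner_mvmul_hermitian:
  assumes "hermitian n d H"
  shows "inner n d (mvmul n d H x) y = inner n d x (mvmul n d H y)"
proof -
  have "inner n d (mvmul n d H x) y
      = (\<Sum>j\<in>qbasis n d. \<Sum>l\<in>qbasis n d. cnj (H j l) * cnj (x l) * y j)"
    unfolding inner_def mvmul_def by (simp add: sum_distrib_right mult.assoc)
  also have "\<dots> = (\<Sum>l\<in>qbasis n d. \<Sum>j\<in>qbasis n d. cnj (x l) * (H l j * y j))"
    using assms unfolding hermitian_def
    by (subst sum.swap) (intro sum.cong refl, metis complex_cnj_cnj mult.commute mult.left_commute)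
  also have "\<dots> = inner n d x (mvmul n d H y)"
    unfolding inner_def mvmul_def by (simp add: sum_distrib_left)
  finally show ?thesis .
qed

lemma inner_mvmul_mvmul:
  assumes "hermitian n d H" and "involution n d H"
  shows "inner n d (mvmul n d H x) (mvmul n d H y) = inner n d x y"
  using assms by (simp add: inner_mvmul_hermitian mvmul_mvmul_involution cong: inner_cong)

lemma orthonormal_columns:
  assumes H: "hermitian n d H" "involution n d H"
  shows "orthonormal n d (\<lambda>i j. H j i)"
  unfolding orthonormal_def
proof (intro ballI)
  fix i i' assume i: "i \<in> qbasis n d" and i': "i' \<in> qbasis n d"
  have "inner n d (\<lambda>j. H j i) (\<lambda>j. H j i') = mmul n d H H i i'"
    unfolding inner_def mmul_def
  proof (intro sum.cong refl)
    fix j assume "j \<in> qbasis n d"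
    then have "H i j = cnj (H j i)" using H(1) i unfolding hermitian_def by blast
    then show "cnj (H j i) * H j i' = H i j * H j i'" by simp
  qed
  also have "\<dots> = idop i i'" using H(2) i i' unfolding involution_def by auto
  finally show "inner n d (\<lambda>j. H j i) (\<lambda>j. H j i') = (if i = i' then 1 else 0)"
    by (simp add: idop_def)
qed

text \<open>The Householder reflection \<open>I - 2 v v\<^sup>\<dagger> / \<parallel>v\<parallel>\<^sup>2\<close> with \<open>v = |a\<rangle> - \<zeta> y\<close>, the phase
  \<open>\<zeta>\<close> chosen to make \<open>\<zeta> y a\<close> real and non-negative, maps \<open>|a\<rangle>\<close> to \<open>\<zeta> y\<close>.\<close>

lemma householder_reflection:
  assumes a: "a \<in> qbasis n d" and y: "inner n d y y = 1"
  obtains H \<zeta> where "hermitian n d H" "involution n d H" "cmod \<zeta> = 1"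
    "\<And>j. j \<in> qbasis n d \<Longrightarrow> H j a = \<zeta> * y j"
    "\<And>c j. c \<noteq> a \<Longrightarrow> y c = 0 \<Longrightarrow> H j c = idop j c"
proof -
  define \<zeta> where "\<zeta> = (if y a = 0 then 1 else cnj (y a) / of_real (cmod (y a)))"
  have \<zeta>1: "cmod \<zeta> = 1" unfolding \<zeta>_def by (simp add: norm_divide)
  have \<zeta>ya: "\<zeta> * y a = of_real (cmod (y a))"
    by (cases "y a = 0")
      (simp_all add: \<zeta>_def field_simps complex_norm_square[symmetric] power2_eq_square mult.commute)
  define v where "v = (\<lambda>j. idop j a - \<zeta> * y j)"
  define s where "s = inner n d v v"
  have s: "s = 2 - 2 * of_real (cmod (y a))"
  proof -
    have "s = 1 - \<zeta> * y a - (cnj (\<zeta> * y a) - cnj \<zeta> * \<zeta>)"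
      unfolding s_def v_def inner_sesquilinear
      using a y by (simp add: inner_idop_left inner_idop_right inner_sesquilinear, simp add: idop_def)
    also have "cnj \<zeta> * \<zeta> = 1" using \<zeta>1 complex_norm_square[of \<zeta>] by (simp add: mult.commute)
    finally show ?thesis unfolding \<zeta>ya by simp
  qed
  show ?thesis
  proof (cases "s = 0")
    case True
    have "v j = 0" if "j \<in> qbasis n d" for j
      using sqnorm_eq_0_imp_zero[of n d v j] True that
      unfolding s_def inner_self_eq_sqnorm by simp
    then have "idop j a = \<zeta> * y j" if "j \<in> qbasis n d" for j
      using that unfolding v_def by simp
    moreover have "hermitian n d idop" unfolding hermitian_def idop_def by simp
    moreover have "involution n d idop"
      unfolding involution_def mmul_def by (simp add: sum_idop_left)
    ultimately show ?thesis using that[of idop \<zeta>] \<zeta>1 by blast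
  next
    case False
    define H where "H = (\<lambda>j k. idop j k - 2 * v j * cnj (v k) / s)"
    have cs: "cnj s = s" unfolding s by simp
    have vv: "(\<Sum>l\<in>qbasis n d. cnj (v l) * v l) = s" unfolding s_def inner_def ..
    have "hermitian n d H" unfolding hermitian_def H_def using cs
      by (auto simp: idop_def mult.commute)
    moreover have "involution n d H" unfolding involution_def
    proof (intro ballI)
      fix j k assume j: "j \<in> qbasis n d" and k: "k \<in> qbasis n d"
      have e: "H j l * H l k = idop j l * idop l k - idop j l * (2 * v l * cnj (v k) / s)
         - (2 * v j * cnj (v l) / s) * idop l k + (4 * v j * cnj (v k) / s\<^sup>2) * (cnj (v l) * v l)"
        for l
        unfolding H_def using False by (simp add: field_simps power2_eq_square)
      have "mmul n d H H j k = idop j k - 2 * v j * cnj (v k) / s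
          - 2 * v j * cnj (v k) / s + (4 * v j * cnj (v k) / s\<^sup>2) * s"
        unfolding mmul_def e sum.distrib sum_subtractf sum_distrib_left[symmetric] vv
          sum_idop_left[OF j] sum_idop_right[OF k] ..
      also have "\<dots> = idop j k" using False by (simp add: field_simps power2_eq_square)
      finally show "mmul n d H H j k = idop j k" .
    qed
    moreover have "H j a = \<zeta> * y j" for j
    proof -
      have "2 * cnj (v a) / s = 1"
        using False \<zeta>ya unfolding v_def s by (simp add: idop_def field_simps)
      then have "H j a = idop j a - v j" unfolding H_def
        by (metis mult.assoc mult.commute mult_1 times_divide_eq_right)
      then show ?thesis unfolding v_def by simp
    qed
    moreover have "H j c = idop j c" if "c \<noteq> a" "y c = 0" for c j
      using that unfolding H_def v_def by (simp add: idop_def)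
    ultimately show ?thesis using that \<zeta>1 by blast
  qed
qed

lemma orthonormal_basis_extending_unit:
  assumes a: "a \<in> qbasis n d" and u: "inner n d u u = 1"
  obtains e \<zeta> where "orthonormal n d e" "cmod \<zeta> = 1" "\<And>j. j \<in> qbasis n d \<Longrightarrow> e a j = \<zeta> * u j"
proof -
  obtain H \<zeta> where "hermitian n d H" "involution n d H" "cmod \<zeta> = 1"
    "\<And>j. j \<in> qbasis n d \<Longrightarrow> H j a = \<zeta> * u j"
    using householder_reflection[OF a u] by metis
  then show ?thesis using that[of "\<lambda>i j. H j i" \<zeta>] orthonormal_columns by blast
qed

lemma orthonormal_basis_extending_pair:
  assumes a: "a \<in> qbasis n d" and b: "b \<in> qbasis n d" and ab: "a \<noteq> b"
    and u: "inner n d u u = 1" and w: "inner n d w w = 1" and uw: "inner n d u w = 0"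
  obtains e \<zeta>\<^sub>1 \<zeta>\<^sub>2 where "orthonormal n d e" "cmod \<zeta>\<^sub>1 = 1" "cmod \<zeta>\<^sub>2 = 1"
    "\<And>j. j \<in> qbasis n d \<Longrightarrow> e a j = \<zeta>\<^sub>1 * u j" "\<And>j. j \<in> qbasis n d \<Longrightarrow> e b j = \<zeta>\<^sub>2 * w j"
proof -
  obtain H\<^sub>1 \<zeta>\<^sub>1 where H\<^sub>1: "hermitian n d H\<^sub>1" "involution n d H\<^sub>1" "cmod \<zeta>\<^sub>1 = 1"
    "\<And>j. j \<in> qbasis n d \<Longrightarrow> H\<^sub>1 j a = \<zeta>\<^sub>1 * u j"
    using householder_reflection[OF a u] by metis
  define w' where "w' = mvmul n d H\<^sub>1 w"
  have w': "inner n d w' w' = 1" unfolding w'_def inner_mvmul_mvmul[OF H\<^sub>1(1,2)] by (rule w)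
  have "w' a = inner n d (mvmul n d H\<^sub>1 (\<lambda>j. idop j a)) w"
    unfolding w'_def inner_mvmul_hermitian[OF H\<^sub>1(1)] inner_idop_left[OF a] ..
  also have "\<dots> = inner n d (\<lambda>j. \<zeta>\<^sub>1 * u j) w"
    using H\<^sub>1(4) sum_idop_right[OF a] by (intro inner_cong) (simp_all add: mvmul_def)
  finally have w'a: "w' a = 0" using uw by (simp add: inner_sesquilinear)
  obtain H\<^sub>2 \<zeta>\<^sub>2 where H\<^sub>2: "hermitian n d H\<^sub>2" "involution n d H\<^sub>2" "cmod \<zeta>\<^sub>2 = 1"
    "\<And>j. j \<in> qbasis n d \<Longrightarrow> H\<^sub>2 j b = \<zeta>\<^sub>2 * w' j"
    "\<And>c j. c \<noteq> b \<Longrightarrow> w' c = 0 \<Longrightarrow> H\<^sub>2 j c = idop j c"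
    using householder_reflection[OF b w'] by metis
  define e where "e = (\<lambda>i. mvmul n d H\<^sub>1 (\<lambda>j. H\<^sub>2 j i))"
  have "orthonormal n d e"
    using orthonormal_columns[OF H\<^sub>2(1,2)]
    unfolding orthonormal_def e_def inner_mvmul_mvmul[OF H\<^sub>1(1,2)] .
  moreover have "e a j = \<zeta>\<^sub>1 * u j" if "j \<in> qbasis n d" for j
    using H\<^sub>1(4)[OF that] H\<^sub>2(5)[OF ab w'a] sum_idop_right[OF a]
    unfolding e_def mvmul_def by simp
  moreover have "e b j = \<zeta>\<^sub>2 * w j" if "j \<in> qbasis n d" for j
  proof -
    have "e b j = \<zeta>\<^sub>2 * mvmul n d H\<^sub>1 w' j"
      unfolding e_def mvmul_def using H\<^sub>2(4) by (simp add: sum_distrib_left algebra_simps)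
    then show ?thesis unfolding w'_def using mvmul_mvmul_involution[OF H\<^sub>1(2) that] by simp
  qed
  ultimately show ?thesis using that H\<^sub>1(3) H\<^sub>2(3) by blast
qed

definition trace :: "nat \<Rightarrow> nat \<Rightarrow> (nat list \<Rightarrow> nat list \<Rightarrow> complex) \<Rightarrow> complex" where
  "trace n d A = (\<Sum>j\<in>qbasis n d. A j j)"

lemma spectral_decomp_eigenvector:
  assumes sd: "spectral_decomp n d \<rho> e lam" and i: "i \<in> qbasis n d" and j: "j \<in> qbasis n d"
  shows "mvmul n d \<rho> (e i) j = of_real (lam i) * e i j"
proof -
  have on: "\<And>i'. i' \<in> qbasis n d \<Longrightarrow> inner n d (e i') (e i) = (if i' = i then 1 else 0)"
    using sd i unfolding spectral_decomp_def by auto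
  have "mvmul n d \<rho> (e i) j
      = (\<Sum>k\<in>qbasis n d. \<Sum>i'\<in>qbasis n d. of_real (lam i') * e i' j * (cnj (e i' k) * e i k))"
    using sd j unfolding spectral_decomp_def mvmul_def
    by (intro sum.cong refl) (simp add: sum_distrib_right mult.assoc)
  also have "\<dots> = (\<Sum>i'\<in>qbasis n d. of_real (lam i') * e i' j * inner n d (e i') (e i))"
    unfolding inner_def by (subst sum.swap) (simp add: sum_distrib_left)
  also have "\<dots> = (\<Sum>i'\<in>qbasis n d. of_real (lam i') * e i' j * idop i' i)"
    by (intro sum.cong refl) (simp add: on idop_def)
  finally show ?thesis using sum_idop_right[OF i] by simp
qed

lemma spectral_decomp_trace:
  assumes sd: "spectral_decomp n d \<rho> e lam"
  shows "trace n d \<rho> = of_real (\<Sum>i\<in>qbasis n d. lam i)"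
proof -
  have "trace n d \<rho> = (\<Sum>j\<in>qbasis n d. \<Sum>i\<in>qbasis n d. of_real (lam i) * (cnj (e i j) * e i j))"
    using sd unfolding trace_def spectral_decomp_def by (intro sum.cong) (auto simp: algebra_simps)
  also have "\<dots> = (\<Sum>i\<in>qbasis n d. of_real (lam i) * inner n d (e i) (e i))"
    unfolding inner_def by (subst sum.swap) (simp add: sum_distrib_left)
  also have "\<dots> = (\<Sum>i\<in>qbasis n d. of_real (lam i))"
    using sd unfolding spectral_decomp_def by (intro sum.cong) auto
  finally show ?thesis by simp
qed

lemma spectral_decomp_trace_mmul_self:
  assumes sd: "spectral_decomp n d \<rho> e lam"
  shows "trace n d (mmul n d \<rho> \<rho>) = of_real (\<Sum>i\<in>qbasis n d. (lam i)\<^sup>2)"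
proof -
  have dec: "\<rho> k j = (\<Sum>i\<in>qbasis n d. complex_of_real (lam i) * e i k * cnj (e i j))"
    if "k \<in> qbasis n d" "j \<in> qbasis n d" for k j
    using sd that unfolding spectral_decomp_def by blast
  have "trace n d (mmul n d \<rho> \<rho>)
      = (\<Sum>j\<in>qbasis n d. \<Sum>i\<in>qbasis n d. of_real (lam i) * cnj (e i j) * mvmul n d \<rho> (e i) j)"
    unfolding trace_def mmul_def mvmul_def
  proof (rule sum.cong[OF refl])
    fix j assume j: "j \<in> qbasis n d"
    have "(\<Sum>k\<in>qbasis n d. \<rho> j k * \<rho> k j)
        = (\<Sum>k\<in>qbasis n d. \<Sum>i\<in>qbasis n d. of_real (lam i) * cnj (e i j) * (\<rho> j k * e i k))"
    proof (intro sum.cong refl)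
      fix k assume "k \<in> qbasis n d"
      then show "\<rho> j k * \<rho> k j
          = (\<Sum>i\<in>qbasis n d. of_real (lam i) * cnj (e i j) * (\<rho> j k * e i k))"
        by (simp only: dec[OF _ j]) (simp add: sum_distrib_left algebra_simps)
    qed
    also have "\<dots> = (\<Sum>i\<in>qbasis n d. of_real (lam i) * cnj (e i j) * (\<Sum>k\<in>qbasis n d. \<rho> j k * e i k))"
      by (subst sum.swap) (simp add: sum_distrib_left)
    finally show "(\<Sum>k\<in>qbasis n d. \<rho> j k * \<rho> k j) = \<dots>" .
  qed
  also have "\<dots> = (\<Sum>j\<in>qbasis n d. \<Sum>i\<in>qbasis n d. of_real ((lam i)\<^sup>2) * (cnj (e i j) * e i j))"
    using spectral_decomp_eigenvector[OF sd]
    by (intro sum.cong refl) (simp add: power2_eq_square algebra_simps)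
  also have "\<dots> = (\<Sum>i\<in>qbasis n d. of_real ((lam i)\<^sup>2) * inner n d (e i) (e i))"
    unfolding inner_def by (subst sum.swap) (simp add: sum_distrib_left)
  also have "\<dots> = (\<Sum>i\<in>qbasis n d. of_real ((lam i)\<^sup>2))"
    using sd unfolding spectral_decomp_def by (intro sum.cong) auto
  finally show ?thesis by simp
qed

lemma mvmul_proj_add:
  "mvmul n d (\<lambda>j k. proj p j k + proj m j k) x = (\<lambda>j. inner n d p x * p j + inner n d m x * m j)"
  unfolding mvmul_def inner_def proj_def
  by (simp add: algebra_simps sum.distrib sum_distrib_left)

lemma trace_proj_add:
  "trace n d (\<lambda>j k. a * proj p j k + b * proj m j k)
    = a * of_real (sqnorm n d p) + b * of_real (sqnorm n d m)"
  unfolding trace_def proj_def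
  by (simp add: sum.distrib sum_distrib_left inner_self_eq_sqnorm[symmetric] inner_def
      mult.commute mult.left_commute)

lemma mmul_proj_add_self:
  assumes pm: "inner n d p m = 0"
  shows "mmul n d (\<lambda>j k. proj p j k + proj m j k) (\<lambda>j k. proj p j k + proj m j k)
    = (\<lambda>j k. of_real (sqnorm n d p) * proj p j k + of_real (sqnorm n d m) * proj m j k)"
proof (intro ext)
  fix j k
  define col where "col = (\<lambda>l. cnj (p k) * p l + cnj (m k) * m l)"
  have mp: "inner n d m p = 0" using pm inner_swap[of n d m p] by simp
  have "mmul n d (\<lambda>j k. proj p j k + proj m j k) (\<lambda>j k. proj p j k + proj m j k) j k
      = mvmul n d (\<lambda>j k. proj p j k + proj m j k) col j"
    unfolding mmul_def mvmul_def col_def proj_def by (simp add: mult.commute)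
  also have "\<dots> = inner n d p col * p j + inner n d m col * m j"
    unfolding mvmul_proj_add ..
  also have "\<dots> = cnj (p k) * of_real (sqnorm n d p) * p j + cnj (m k) * of_real (sqnorm n d m) * m j"
    unfolding col_def inner_sesquilinear inner_self_eq_sqnorm pm mp by simp
  finally show "mmul n d (\<lambda>j k. proj p j k + proj m j k) (\<lambda>j k. proj p j k + proj m j k) j k
      = of_real (sqnorm n d p) * proj p j k + of_real (sqnorm n d m) * proj m j k"
    by (simp add: proj_def algebra_simps)
qed

lemma spectral_decomp_proj_add_eigenvalues:
  assumes pm: "inner n d p m = 0"
    and sd: "spectral_decomp n d (\<lambda>j k. proj p j k + proj m j k) e lam"
    and i: "i \<in> qbasis n d"
  shows "lam i \<in> {0, sqnorm n d p, sqnorm n d m}"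
proof (rule ccontr)
  assume lam: "lam i \<notin> {0, sqnorm n d p, sqnorm n d m}"
  define \<rho>e where "\<rho>e = mvmul n d (\<lambda>j k. proj p j k + proj m j k) (e i)"
  have mp: "inner n d m p = 0" using pm inner_swap[of n d m p] by simp
  have eig: "inner n d q \<rho>e = of_real (lam i) * inner n d q (e i)" for q
  proof -
    have "inner n d q \<rho>e = inner n d q (\<lambda>j. of_real (lam i) * e i j)"
      unfolding \<rho>e_def using spectral_decomp_eigenvector[OF sd i] by (intro inner_cong) auto
    then show ?thesis by (simp add: inner_sesquilinear)
  qed
  have \<rho>e: "\<rho>e = (\<lambda>j. inner n d p (e i) * p j + inner n d m (e i) * m j)"
    unfolding \<rho>e_def mvmul_proj_add ..
  have "(of_real (lam i) - of_real (sqnorm n d p)) * inner n d p (e i) = 0"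
    using eig[of p] unfolding \<rho>e inner_sesquilinear pm inner_self_eq_sqnorm
    by (simp add: algebra_simps) metis
  moreover have "lam i \<noteq> sqnorm n d p" using lam by auto
  ultimately have p0: "inner n d p (e i) = 0" by simp
  have "(of_real (lam i) - of_real (sqnorm n d m)) * inner n d m (e i) = 0"
    using eig[of m] unfolding \<rho>e inner_sesquilinear mp inner_self_eq_sqnorm
    by (simp add: algebra_simps) metis
  moreover have "lam i \<noteq> sqnorm n d m" using lam by auto
  ultimately have m0: "inner n d m (e i) = 0" by simp
  have "of_real (lam i) = of_real (lam i) * inner n d (e i) (e i)"
    using sd i unfolding spectral_decomp_def by simp
  also have "\<dots> = 0"
    using eig[of "e i"] unfolding \<rho>e p0 m0 by (simp add: inner_def)
  finally show False using lam by simp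
qed

lemma normalized_vector:
  assumes "0 < sqnorm n d x"
  obtains u r where "inner n d u u = 1" "r > 0" "r * r = sqnorm n d x" "x = (\<lambda>j. of_real r * u j)"
proof
  define r where "r = sqrt (sqnorm n d x)"
  show r: "r > 0" "r * r = sqnorm n d x" using assms unfolding r_def by auto
  show "x = (\<lambda>j. of_real r * (of_real (1 / r) * x j))" using r by simp
  show "inner n d (\<lambda>j. of_real (1 / r) * x j) (\<lambda>j. of_real (1 / r) * x j) = 1"
    unfolding inner_sesquilinear inner_self_eq_sqnorm using r assms by (simp flip: of_real_mult)
qed

lemma spectral_decomp_rank_one:
  assumes a: "a \<in> qbasis n d" and u: "inner n d u u = 1"
    and \<rho>: "\<And>j k. j \<in> qbasis n d \<Longrightarrow> k \<in> qbasis n d \<Longrightarrow> \<rho> j k = of_real s * (u j * cnj (u k))"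
  shows "\<exists>e lam. spectral_decomp n d \<rho> e lam"
proof -
  obtain e \<zeta> where e: "orthonormal n d e" "cmod \<zeta> = 1" "\<And>j. j \<in> qbasis n d \<Longrightarrow> e a j = \<zeta> * u j"
    using orthonormal_basis_extending_unit[OF a u] by blast
  define lam where "lam = (\<lambda>i. if i = a then s else 0)"
  have "spectral_decomp n d \<rho> e lam"
    unfolding spectral_decomp_def
  proof (intro conjI ballI)
    fix j k assume j: "j \<in> qbasis n d" and k: "k \<in> qbasis n d"
    have "(\<Sum>i\<in>qbasis n d. of_real (lam i) * e i j * cnj (e i k))
        = (\<Sum>i\<in>{a}. of_real (lam i) * e i j * cnj (e i k))"
      using a finite_qbasis by (intro sum.mono_neutral_right) (auto simp: lam_def)
    also have "\<dots> = of_real s * (e a j * cnj (e a k))"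
      by (simp add: lam_def mult.assoc)
    also have "\<dots> = \<rho> j k"
      unfolding \<rho>[OF j k] by (simp only: e(3)[OF j] e(3)[OF k] unit_mult_cnj[OF e(2)])
    finally show "\<rho> j k = (\<Sum>i\<in>qbasis n d. of_real (lam i) * e i j * cnj (e i k))" ..
  qed (use e(1) in \<open>auto simp: orthonormal_def\<close>)
  then show ?thesis by blast
qed

lemma spectral_decomp_rank_two:
  assumes a: "a \<in> qbasis n d" and b: "b \<in> qbasis n d" and ab: "a \<noteq> b"
    and u: "inner n d u u = 1" and w: "inner n d w w = 1" and uw: "inner n d u w = 0"
    and \<rho>: "\<And>j k. j \<in> qbasis n d \<Longrightarrow> k \<in> qbasis n d \<Longrightarrow>
      \<rho> j k = of_real s * (u j * cnj (u k)) + of_real t * (w j * cnj (w k))"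
  shows "\<exists>e lam. spectral_decomp n d \<rho> e lam"
proof -
  obtain e \<zeta>\<^sub>1 \<zeta>\<^sub>2 where e: "orthonormal n d e" "cmod \<zeta>\<^sub>1 = 1" "cmod \<zeta>\<^sub>2 = 1"
    "\<And>j. j \<in> qbasis n d \<Longrightarrow> e a j = \<zeta>\<^sub>1 * u j" "\<And>j. j \<in> qbasis n d \<Longrightarrow> e b j = \<zeta>\<^sub>2 * w j"
    using orthonormal_basis_extending_pair[OF a b ab u w uw] by blast
  define lam where "lam = (\<lambda>i. if i = a then s else if i = b then t else 0)"
  have "spectral_decomp n d \<rho> e lam"
    unfolding spectral_decomp_def
  proof (intro conjI ballI)
    fix j k assume j: "j \<in> qbasis n d" and k: "k \<in> qbasis n d"
    have "(\<Sum>i\<in>qbasis n d. of_real (lam i) * e i j * cnj (e i k))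
        = (\<Sum>i\<in>{a, b}. of_real (lam i) * e i j * cnj (e i k))"
      using a b finite_qbasis by (intro sum.mono_neutral_right) (auto simp: lam_def)
    also have "\<dots> = of_real s * (e a j * cnj (e a k)) + of_real t * (e b j * cnj (e b k))"
      using ab by (simp add: lam_def ab[symmetric] mult.assoc)
    also have "\<dots> = \<rho> j k"
      unfolding \<rho>[OF j k]
      by (simp only: e(4)[OF j] e(4)[OF k] e(5)[OF j] e(5)[OF k]
          unit_mult_cnj[OF e(2)] unit_mult_cnj[OF e(3)])
    finally show "\<rho> j k = (\<Sum>i\<in>qbasis n d. of_real (lam i) * e i j * cnj (e i k))" ..
  qed (use e(1) in \<open>auto simp: orthonormal_def\<close>)
  then show ?thesis by blast
qed

lemma spectral_decomp_proj_add_exists: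
  assumes d: "d \<ge> 2" and n: "n \<ge> 1"
    and pm: "inner n d p m = 0" and p: "0 < sqnorm n d p"
  shows "\<exists>e lam. spectral_decomp n d (\<lambda>j k. proj p j k + proj m j k) e lam"
proof -
  obtain a b where a: "a \<in> qbasis n d" and b: "b \<in> qbasis n d" and ab: "a \<noteq> b"
    using qbasis_two_elements[OF d n] by blast
  obtain u r where u: "inner n d u u = 1" and r: "r > 0" "r * r = sqnorm n d p"
    and pu: "p = (\<lambda>j. of_real r * u j)"
    using normalized_vector[OF p] by blast
  have proj_p: "proj p j k = of_real (sqnorm n d p) * (u j * cnj (u k))" for j k
    unfolding r(2)[symmetric] by (simp add: pu proj_def algebra_simps)
  show ?thesis
  proof (cases "sqnorm n d m = 0")
    case True
    then show ?thesis
      using sqnorm_eq_0_imp_zero[OF True] proj_p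
      by (intro spectral_decomp_rank_one[OF a u, where s = "sqnorm n d p"]) (simp add: proj_def[of m])
  next
    case False
    then have m: "0 < sqnorm n d m" using sqnorm_nonneg[of n d m] by simp
    obtain w r' where w: "inner n d w w = 1" and r': "r' > 0" "r' * r' = sqnorm n d m"
      and mw: "m = (\<lambda>j. of_real r' * w j)"
      using normalized_vector[OF m] by blast
    have proj_m: "proj m j k = of_real (sqnorm n d m) * (w j * cnj (w k))" for j k
      unfolding r'(2)[symmetric] by (simp add: mw proj_def algebra_simps)
    have "of_real (r * r') * inner n d u w = inner n d p m"
      unfolding pu mw inner_sesquilinear by simp
    then have "inner n d u w = 0" using r r' pm by simp
    then show ?thesis
      using proj_p proj_m
      by (intro spectral_decomp_rank_two[OF a b ab u w, where s = "sqnorm n d p" and t = "sqnorm n d m"])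
        simp_all
  qed
qed
text \<open>On the three points \<open>0, a, b\<close> the function \<open>x powr \<alpha>\<close> coincides with a polynomial
  \<open>r\<^sub>1 x + r\<^sub>2 x\<^sup>2\<close>, so its sum over values in \<open>{0, a, b}\<close> is fixed by the first two moments.\<close>

lemma powr_interpolation:
  fixes a b \<alpha> :: real
  assumes a: "a > 0" and b: "b \<ge> 0"
  obtains r\<^sub>1 r\<^sub>2 where "\<And>x. x \<in> {0, a, b} \<Longrightarrow> x powr \<alpha> = r\<^sub>1 * x + r\<^sub>2 * x\<^sup>2"
proof (cases "a = b")
  case True
  show ?thesis by (rule that[of "a powr \<alpha> / a" 0]) (use a True in auto)
next
  case ab: False
  define r\<^sub>2 where "r\<^sub>2 = (a powr \<alpha> / a - b powr \<alpha> / b) / (a - b)"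
  define r\<^sub>1 where "r\<^sub>1 = a powr \<alpha> / a - r\<^sub>2 * a"
  have "a powr \<alpha> = r\<^sub>1 * a + r\<^sub>2 * a\<^sup>2"
    unfolding r\<^sub>1_def using a by (simp add: field_simps power2_eq_square)
  moreover have "b powr \<alpha> = r\<^sub>1 * b + r\<^sub>2 * b\<^sup>2"
  proof (cases "b = 0")
    case False
    have "r\<^sub>1 * b + r\<^sub>2 * b\<^sup>2 = b * (a powr \<alpha> / a) - r\<^sub>2 * b * (a - b)"
      unfolding r\<^sub>1_def by (simp add: algebra_simps power2_eq_square)
    also have "r\<^sub>2 * b * (a - b) = b * (a powr \<alpha> / a - b powr \<alpha> / b)"
      unfolding r\<^sub>2_def using a ab False by (simp add: field_simps)
    finally show ?thesis using False b by (simp add: field_simps)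
  qed simp
  ultimately have "x powr \<alpha> = r\<^sub>1 * x + r\<^sub>2 * x\<^sup>2" if "x \<in> {0, a, b}" for x
    using that by auto
  then show ?thesis by (rule that)
qed

lemma sum_powr_eq_of_moments:
  fixes l :: "'i \<Rightarrow> real" and a b \<alpha> :: real
  assumes "\<And>i. i \<in> I \<Longrightarrow> l i \<in> {0, a, b}"
    and "(\<Sum>i\<in>I. l i) = a + b" and "(\<Sum>i\<in>I. (l i)\<^sup>2) = a\<^sup>2 + b\<^sup>2"
    and "a > 0" and "b \<ge> 0"
  shows "(\<Sum>i\<in>I. l i powr \<alpha>) = a powr \<alpha> + b powr \<alpha>"
proof -
  obtain r\<^sub>1 r\<^sub>2 where r: "\<And>x. x \<in> {0, a, b} \<Longrightarrow> x powr \<alpha> = r\<^sub>1 * x + r\<^sub>2 * x\<^sup>2"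
    using powr_interpolation[OF assms(4,5), where \<alpha> = \<alpha>] by blast
  have "(\<Sum>i\<in>I. l i powr \<alpha>) = r\<^sub>1 * (\<Sum>i\<in>I. l i) + r\<^sub>2 * (\<Sum>i\<in>I. (l i)\<^sup>2)"
    using assms(1) r by (simp add: sum.distrib sum_distrib_left)
  also have "\<dots> = (r\<^sub>1 * a + r\<^sub>2 * a\<^sup>2) + (r\<^sub>1 * b + r\<^sub>2 * b\<^sup>2)"
    unfolding assms(2,3) by (simp add: algebra_simps)
  also have "\<dots> = a powr \<alpha> + b powr \<alpha>" using r by simp
  finally show ?thesis .
qed

lemma tr_pow_proj_add:
  assumes d: "d \<ge> 2" and n: "n \<ge> 1"
    and pm: "inner n d p m = 0" and p: "0 < sqnorm n d p"
  shows "tr_pow n d \<alpha> (\<lambda>j k. proj p j k + proj m j k) = sqnorm n d p powr \<alpha> + sqnorm n d m powr \<alpha>"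
proof -
  let ?\<rho> = "\<lambda>j k. proj p j k + proj m j k"
  have "\<exists>s e lam. spectral_decomp n d ?\<rho> e lam \<and> s = (\<Sum>i\<in>qbasis n d. lam i powr \<alpha>)"
    using spectral_decomp_proj_add_exists[OF d n pm p] by blast
  from someI_ex[OF this] obtain e lam where sd: "spectral_decomp n d ?\<rho> e lam"
    and tr: "tr_pow n d \<alpha> ?\<rho> = (\<Sum>i\<in>qbasis n d. lam i powr \<alpha>)"
    unfolding tr_pow_def by blast
  have "of_real (\<Sum>i\<in>qbasis n d. lam i) = trace n d ?\<rho>"
    by (rule spectral_decomp_trace[OF sd, symmetric])
  also have "\<dots> = of_real (sqnorm n d p + sqnorm n d m)"
    using trace_proj_add[of n d 1 p 1 m] by simp
  finally have sum1: "(\<Sum>i\<in>qbasis n d. lam i) = sqnorm n d p + sqnorm n d m"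
    by (simp only: of_real_eq_iff)
  have "of_real (\<Sum>i\<in>qbasis n d. (lam i)\<^sup>2) = trace n d (mmul n d ?\<rho> ?\<rho>)"
    by (rule spectral_decomp_trace_mmul_self[OF sd, symmetric])
  also have "\<dots> = of_real ((sqnorm n d p)\<^sup>2 + (sqnorm n d m)\<^sup>2)"
    unfolding mmul_proj_add_self[OF pm] trace_proj_add by (simp add: power2_eq_square)
  finally have sum2: "(\<Sum>i\<in>qbasis n d. (lam i)\<^sup>2) = (sqnorm n d p)\<^sup>2 + (sqnorm n d m)\<^sup>2"
    by (simp only: of_real_eq_iff)
  show ?thesis unfolding tr
    using spectral_decomp_proj_add_eigenvalues[OF pm sd] sum1 sum2 p sqnorm_nonneg
    by (intro sum_powr_eq_of_moments) auto
qed

text \<open>With \<open>t\<close> the phase making \<open>t \<langle>\<psi>|\<phi>\<rangle>\<close> real and non-negative, the vectors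
  \<open>(\<psi> \<plusminus> t \<phi>) / 2\<close> are orthogonal and diagonalise the mixture.\<close>

lemma mixture_eq_proj_add:
  assumes \<psi>: "inner n d \<psi> \<psi> = 1" and \<phi>: "inner n d \<phi> \<phi> = 1"
  obtains p m where "inner n d p m = 0"
    "sqnorm n d p = (1 + cmod (inner n d \<psi> \<phi>)) / 2" "sqnorm n d m = (1 - cmod (inner n d \<psi> \<phi>)) / 2"
    "(\<lambda>j k. (proj \<psi> j k + proj \<phi> j k) / 2) = (\<lambda>j k. proj p j k + proj m j k)"
proof
  define g where "g = inner n d \<psi> \<phi>"
  define t where "t = (if g = 0 then 1 else cnj g / of_real (cmod g))"
  have tg: "t * g = of_real (cmod g)" and gt: "cnj t * cnj g = of_real (cmod g)"
    and tt: "cnj t * t = 1"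
    by (cases "g = 0"; simp add: t_def field_simps complex_norm_square[symmetric]
        power2_eq_square mult.commute)+
  have \<psi>\<phi>: "inner n d \<psi> \<phi> = g" and \<phi>\<psi>: "inner n d \<phi> \<psi> = cnj g"
    unfolding g_def by (rule refl, rule inner_swap)
  define p where "p = (\<lambda>j. (1/2) * \<psi> j + (t/2) * \<phi> j)"
  define m where "m = (\<lambda>j. (1/2) * \<psi> j - (t/2) * \<phi> j)"
  have "of_real (sqnorm n d p) = inner n d p p" by (rule inner_self_eq_sqnorm[symmetric])
  also have "\<dots> = of_real ((1 + cmod g) / 2)"
    unfolding p_def inner_sesquilinear \<psi> \<phi> \<psi>\<phi> \<phi>\<psi> using tg gt tt by (simp add: field_simps)
  finally show "sqnorm n d p = (1 + cmod (inner n d \<psi> \<phi>)) / 2"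
    unfolding g_def of_real_eq_iff .
  have "of_real (sqnorm n d m) = inner n d m m" by (rule inner_self_eq_sqnorm[symmetric])
  also have "\<dots> = of_real ((1 - cmod g) / 2)"
    unfolding m_def inner_sesquilinear \<psi> \<phi> \<psi>\<phi> \<phi>\<psi> using tg gt tt by (simp add: field_simps)
  finally show "sqnorm n d m = (1 - cmod (inner n d \<psi> \<phi>)) / 2"
    unfolding g_def of_real_eq_iff .
  show "inner n d p m = 0"
    unfolding p_def m_def inner_sesquilinear \<psi> \<phi> \<psi>\<phi> \<phi>\<psi> using tg gt tt by (simp add: field_simps)
  have "t * cnj t = 1" using tt by (simp add: mult.commute)
  then show "(\<lambda>j k. (proj \<psi> j k + proj \<phi> j k) / 2) = (\<lambda>j k. proj p j k + proj m j k)"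
    unfolding p_def m_def proj_def by (intro ext) (simp add: field_simps)
qed

lemma cmod_inner_le_1:
  assumes "inner n d \<psi> \<psi> = 1" and "inner n d \<phi> \<phi> = 1"
  shows "cmod (inner n d \<psi> \<phi>) \<le> 1"
proof -
  obtain m where "sqnorm n d m = (1 - cmod (inner n d \<psi> \<phi>)) / 2"
    using mixture_eq_proj_add[OF assms] by blast
  then show ?thesis using sqnorm_nonneg[of n d m] by simp
qed

definition binary_power_sum :: "real \<Rightarrow> real \<Rightarrow> real" where
  "binary_power_sum \<alpha> x = ((1 + x) / 2) powr \<alpha> + ((1 - x) / 2) powr \<alpha>"

lemma tr_pow_mixture:
  assumes d: "d \<ge> 2" and n: "n \<ge> 1"
    and \<psi>: "inner n d \<psi> \<psi> = 1" and \<phi>: "inner n d \<phi> \<phi> = 1"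
  shows "tr_pow n d \<alpha> (\<lambda>j k. (proj \<psi> j k + proj \<phi> j k) / 2)
    = binary_power_sum \<alpha> (cmod (inner n d \<psi> \<phi>))"
proof -
  obtain p m where pm: "inner n d p m = 0"
    and p: "sqnorm n d p = (1 + cmod (inner n d \<psi> \<phi>)) / 2"
    and m: "sqnorm n d m = (1 - cmod (inner n d \<psi> \<phi>)) / 2"
    and mix: "(\<lambda>j k. (proj \<psi> j k + proj \<phi> j k) / 2) = (\<lambda>j k. proj p j k + proj m j k)"
    using mixture_eq_proj_add[OF \<psi> \<phi>] by blast
  have p0: "0 < sqnorm n d p" unfolding p by (simp add: add_pos_nonneg)
  show ?thesis unfolding mix tr_pow_proj_add[OF d n pm p0] p m binary_power_sum_def ..
qed

lemma tr_pow_proj: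
  assumes d: "d \<ge> 2" and n: "n \<ge> 1" and \<psi>: "inner n d \<psi> \<psi> = 1"
  shows "tr_pow n d \<alpha> (proj \<psi>) = 1"
  using tr_pow_mixture[OF d n \<psi> \<psi>, of \<alpha>] \<psi> by (simp add: binary_power_sum_def)

definition S_of_tr :: "real \<Rightarrow> real \<Rightarrow> real \<Rightarrow> real" where
  "S_of_tr \<alpha> \<beta> t = 1 / ((1 - \<alpha>) * \<beta>) * (t powr \<beta> - 1)"

lemma J_ab_proj_proj:
  assumes d: "d \<ge> 2" and n: "n \<ge> 1"
    and \<psi>: "inner n d \<psi> \<psi> = 1" and \<phi>: "inner n d \<phi> \<phi> = 1"
  shows "J_ab n d \<alpha> \<beta> (proj \<psi>) (proj \<phi>) = S_of_tr \<alpha> \<beta> (binary_power_sum \<alpha> (cmod (inner n d \<psi> \<phi>)))"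
  unfolding J_ab_def S_ab_def tr_pow_mixture[OF d n \<psi> \<phi>] tr_pow_proj[OF d n \<psi>]
    tr_pow_proj[OF d n \<phi>] S_of_tr_def
  by simp

lemma binary_power_sum_pos: "0 \<le> x \<Longrightarrow> x \<le> 1 \<Longrightarrow> 0 < binary_power_sum \<alpha> x"
  unfolding binary_power_sum_def by (intro add_pos_nonneg) auto

lemma continuous_on_binary_power_sum:
  "0 < \<alpha> \<Longrightarrow> continuous_on {0..1} (binary_power_sum \<alpha>)"
  unfolding binary_power_sum_def[abs_def] by (intro continuous_intros continuous_on_powr') auto

lemma binary_power_sum_has_derivative:
  assumes "0 < z" and "z < 1"
  shows "(binary_power_sum \<alpha> has_real_derivative
    \<alpha> / 2 * (((1 + z) / 2) powr (\<alpha> - 1) - ((1 - z) / 2) powr (\<alpha> - 1))) (at z)"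
proof -
  have "((\<lambda>z. ((1 + z) / 2) powr \<alpha>) has_real_derivative \<alpha> * ((1 + z) / 2) powr (\<alpha> - 1) * (1 / 2)) (at z)"
    by (rule DERIV_chain2[OF has_real_derivative_powr])
      (use assms in \<open>auto intro!: derivative_eq_intros\<close>)
  moreover have "((\<lambda>z. ((1 - z) / 2) powr \<alpha>) has_real_derivative \<alpha> * ((1 - z) / 2) powr (\<alpha> - 1) * (- 1 / 2)) (at z)"
    by (rule DERIV_chain2[OF has_real_derivative_powr])
      (use assms in \<open>auto intro!: derivative_eq_intros\<close>)
  ultimately show ?thesis
    unfolding binary_power_sum_def[abs_def] by (auto dest: DERIV_add simp: algebra_simps)
qed

text \<open>The derivative has the sign of \<open>\<alpha> - 1\<close> on \<open>(0, 1)\<close>.\<close>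

lemma binary_power_sum_monotone:
  assumes \<alpha>: "0 < \<alpha>" and xy: "0 \<le> x" "x \<le> y" "y \<le> 1"
  shows "(\<alpha> - 1) * binary_power_sum \<alpha> x \<le> (\<alpha> - 1) * binary_power_sum \<alpha> y"
proof (rule DERIV_nonneg_imp_increasing_open[OF xy(2)])
  show "continuous_on {x..y} (\<lambda>z. (\<alpha> - 1) * binary_power_sum \<alpha> z)"
    using continuous_on_subset[OF continuous_on_binary_power_sum[OF \<alpha>]] xy
    by (intro continuous_intros) auto
  fix z assume z: "x < z" "z < y"
  define A where "A = ((1 + z) / 2) powr (\<alpha> - 1) - ((1 - z) / 2) powr (\<alpha> - 1)"
  have "0 \<le> (\<alpha> - 1) * A"
  proof (cases "1 \<le> \<alpha>")
    case True
    then have "((1 - z) / 2) powr (\<alpha> - 1) \<le> ((1 + z) / 2) powr (\<alpha> - 1)"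
      using z xy by (intro powr_mono2) auto
    then show ?thesis using True unfolding A_def by simp
  next
    case False
    then have "((1 + z) / 2) powr (\<alpha> - 1) \<le> ((1 - z) / 2) powr (\<alpha> - 1)"
      using z xy by (intro powr_mono2') auto
    then show ?thesis using False unfolding A_def by (simp add: mult_nonpos_nonpos)
  qed
  then have "0 \<le> (\<alpha> - 1) * (\<alpha> / 2 * A)"
    using \<alpha> by (simp add: mult.left_commute[of "\<alpha> - 1"])
  moreover have "((\<lambda>z. (\<alpha> - 1) * binary_power_sum \<alpha> z) has_real_derivative (\<alpha> - 1) * (\<alpha> / 2 * A)) (at z)"
    unfolding A_def using z xy by (intro DERIV_cmult binary_power_sum_has_derivative) auto
  ultimately show "\<exists>D. ((\<lambda>z. (\<alpha> - 1) * binary_power_sum \<alpha> z) has_real_derivative D) (at z) \<and> 0 \<le> D"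
    by blast
qed

lemma powr_minus_one_div_mono:
  fixes s t \<beta> :: real
  assumes "\<beta> \<noteq> 0" and "0 < s" and "s \<le> t"
  shows "(s powr \<beta> - 1) / \<beta> \<le> (t powr \<beta> - 1) / \<beta>"
proof (cases "\<beta> > 0")
  case True
  then have "s powr \<beta> \<le> t powr \<beta>" using assms by (intro powr_mono2) auto
  then show ?thesis using True by (intro divide_right_mono) auto
next
  case False
  then have "t powr \<beta> \<le> s powr \<beta>" using assms by (intro powr_mono2') auto
  then show ?thesis using False assms(1) by (intro divide_right_mono_neg) auto
qed

lemma S_of_tr_binary_power_sum_antimono:
  assumes \<alpha>: "0 < \<alpha>" "\<alpha> \<noteq> 1" and \<beta>: "\<beta> \<noteq> 0" and xy: "0 \<le> x" "x \<le> y" "y \<le> 1"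
  shows "S_of_tr \<alpha> \<beta> (binary_power_sum \<alpha> y) \<le> S_of_tr \<alpha> \<beta> (binary_power_sum \<alpha> x)"
proof -
  define h where "h t = (t powr \<beta> - 1) / \<beta>" for t
  have S: "S_of_tr \<alpha> \<beta> t = h t / (1 - \<alpha>)" for t
    unfolding S_of_tr_def h_def by simp
  have pos: "0 < binary_power_sum \<alpha> x" "0 < binary_power_sum \<alpha> y"
    using xy by (auto intro: binary_power_sum_pos)
  have mono: "(\<alpha> - 1) * binary_power_sum \<alpha> x \<le> (\<alpha> - 1) * binary_power_sum \<alpha> y"
    by (rule binary_power_sum_monotone[OF \<alpha>(1) xy])
  show ?thesis
  proof (cases "\<alpha> < 1")
    case True
    then have "h (binary_power_sum \<alpha> y) \<le> h (binary_power_sum \<alpha> x)"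
      using mono pos unfolding h_def by (intro powr_minus_one_div_mono[OF \<beta>]) auto
    then show ?thesis unfolding S using True by (intro divide_right_mono) auto
  next
    case False
    then have "h (binary_power_sum \<alpha> x) \<le> h (binary_power_sum \<alpha> y)"
      using mono pos \<alpha>(2) unfolding h_def by (intro powr_minus_one_div_mono[OF \<beta>]) auto
    then show ?thesis unfolding S using False \<alpha>(2) by (intro divide_right_mono_neg) auto
  qed
qed

lemma continuous_on_S_of_tr_binary_power_sum:
  assumes "0 < \<alpha>"
  shows "continuous_on {0..1} (\<lambda>x. S_of_tr \<alpha> \<beta> (binary_power_sum \<alpha> x))"
  unfolding S_of_tr_def
  using continuous_on_binary_power_sum[OF assms] binary_power_sum_pos
  by (intro continuous_intros continuous_on_powr') (auto simp: less_le)

text \<open>Clamping the argument of \<open>f\<close> to \<open>[a, b]\<close> gives a function on all of \<open>\<real>\<close> that is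
  antitone and continuous, as \<open>continuous_at_Sup_antimono\<close> requires.\<close>

lemma Inf_image_antimono_continuous:
  fixes f :: "real \<Rightarrow> real"
  assumes cont: "continuous_on {a..b} f"
    and anti: "\<And>x y. a \<le> x \<Longrightarrow> x \<le> y \<Longrightarrow> y \<le> b \<Longrightarrow> f y \<le> f x"
    and C: "C \<subseteq> {a..b}" "C \<noteq> {}"
  shows "Inf (f ` C) = f (Sup C)"
proof -
  define g where "g x = f (max a (min b x))" for x
  have ab: "a \<le> b" using C by auto
  have bdd: "bdd_above C" using C(1) by (intro bdd_aboveI[of C b]) auto
  obtain c where c: "c \<in> C" using C(2) by blast
  have Sup: "a \<le> Sup C" "Sup C \<le> b"
    using C c cSup_upper[OF c bdd] by (auto intro!: cSup_least)
  have "antimono g"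
    unfolding g_def using ab by (intro antimonoI anti) auto
  moreover have "continuous_on UNIV g"
    unfolding g_def using ab
    by (intro continuous_on_compose2[OF cont] continuous_intros) auto
  then have "continuous (at_left (Sup C)) g"
    by (simp add: continuous_on_eq_continuous_at continuous_at_imp_continuous_at_within)
  ultimately have "g (Sup C) = Inf (g ` C)"
    using C(2) bdd by (intro continuous_at_Sup_antimono)
  moreover have "g ` C = f ` C" using C unfolding g_def by (intro image_cong) auto
  ultimately show ?thesis using Sup unfolding g_def by simp
qed

lemma clifford_idop: "clifford n d idop"
proof -
  have adj: "adj idop = idop" unfolding adj_def idop_def by (auto intro!: ext)
  have "mmul n d idop A j k = A j k" if "j \<in> qbasis n d" for A j k
    unfolding mmul_def by (rule sum_idop_left[OF that])
  moreover have "mmul n d A idop j k = A j k" if "k \<in> qbasis n d" for A j k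
    unfolding mmul_def by (rule sum_idop_right[OF that])
  ultimately show ?thesis
    unfolding clifford_def unitary_op_def adj by (auto intro!: exI[of _ 0])
qed

lemma stab_states_nonempty: "stab_states n d \<noteq> {}"
  unfolding stab_states_def using clifford_idop by blast

lemma stab_state_unit:
  assumes "d \<ge> 1" and "\<phi> \<in> stab_states n d"
  shows "inner n d \<phi> \<phi> = 1"
proof -
  obtain V where V: "clifford n d V" and \<phi>: "\<phi> = (\<lambda>j. V j (replicate n 0))"
    using assms(2) unfolding stab_states_def by blast
  have "replicate n 0 \<in> qbasis n d" using assms(1) unfolding qbasis_def by auto
  then have "mmul n d (adj V) V (replicate n 0) (replicate n 0) = 1"
    using V unfolding clifford_def unitary_op_def idop_def by auto
  then show ?thesis unfolding \<phi> inner_def mmul_def adj_def .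
qed

theorem proposition2:
  fixes n d :: nat and \<psi> :: "nat list \<Rightarrow> complex" and \<alpha> \<beta> :: real
  assumes "d \<ge> 2" and "n \<ge> 1"
    and "(\<Sum>j\<in>qbasis n d. (cmod (\<psi> j))^2) = 1"
    and "\<alpha> > 0" and "\<alpha> \<noteq> 1" and "\<beta> \<noteq> 0"
  shows "M_ab n d \<alpha> \<beta> \<psi> =
    (1 / ((1 - \<alpha>) * \<beta>)) *
      ((((1 + c_abs n d \<psi>) / 2) powr \<alpha> + ((1 - c_abs n d \<psi>) / 2) powr \<alpha>) powr \<beta> - 1)"
proof -
  note d = assms(1) and n = assms(2)
  have \<psi>: "inner n d \<psi> \<psi> = 1" using assms(3) by (simp add: inner_self_eq_sqnorm sqnorm_def)
  have stab: "\<And>\<phi>. \<phi> \<in> stab_states n d \<Longrightarrow> inner n d \<phi> \<phi> = 1"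
    using d by (intro stab_state_unit) auto
  define F where "F x = S_of_tr \<alpha> \<beta> (binary_power_sum \<alpha> x)" for x
  define C where "C = (\<lambda>\<phi>. cmod (inner n d \<psi> \<phi>)) ` stab_states n d"
  have "M_ab n d \<alpha> \<beta> \<psi> = Inf (F ` C)"
    unfolding M_ab_def C_def image_image F_def
    using J_ab_proj_proj[OF d n \<psi> stab] by (intro arg_cong[of _ _ Inf] image_cong) auto
  also have "\<dots> = F (Sup C)"
  proof (rule Inf_image_antimono_continuous)
    show "continuous_on {0..1} F"
      unfolding F_def using assms(4) by (rule continuous_on_S_of_tr_binary_power_sum)
    show "C \<subseteq> {0..1}" "C \<noteq> {}"
      unfolding C_def using cmod_inner_le_1[OF \<psi> stab] stab_states_nonempty by auto
  qed (unfold F_def, rule S_of_tr_binary_power_sum_antimono, use assms in auto)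
  also have "\<dots> = (1 / ((1 - \<alpha>) * \<beta>)) *
      ((((1 + c_abs n d \<psi>) / 2) powr \<alpha> + ((1 - c_abs n d \<psi>) / 2) powr \<alpha>) powr \<beta> - 1)"
    unfolding F_def S_of_tr_def binary_power_sum_def c_abs_def C_def ..
  finally show ?thesis .
qed
end
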